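(* Let $n,d\in\mathbb{N}$, let $f_{1},\ldots,f_{d}:\{0,1\}^n\to[0,1]$ be functions, $\epsilon\in(0,\infty)$ and $\delta\in(0,\frac{1}{2})$. There is a randomized algorithm that, given sample access to each $f_{i}$, $(d+1)$-pseudodeterministically $(\epsilon,\delta)$-approximates $\langle\mathbb{E}(f_{i})\rangle_{i=1}^{d}$ relative to the $d_{max}$ metric using $O\left(\frac{(d+1)^{2}}{\epsilon^{2}}\cdot\log\left(\frac{d}{\delta}\right)\right)$ samples.
   Context: $\mathbb{E}(f_i)$ is the average of $f_i$ over uniformly random $x\in\{0,1\}^n$. Sample access means the algorithm may draw uniformly random points $x\in\{0,1\}^n$ and learn the values $f_i(x)$; each such point is one sample. $d_{max}(\vec{x},\vec{y})=\max_i|x_i-y_i|$ on $\mathbb{R}^d$. An algorithm $(d+1)$-pseudodeterministically $(\epsilon,\delta)$-approximates a vector $\vec{v}\in\mathbb{R}^d$ if there is a set $S$ of at most $d+1$ vectors (depending only on the instance, not on the algorithm's randomness) such that with probability at least $1-\delta$ the output $\vec{\alpha}$ lies in $S$ and satisfies $d_{max}(\vec{\alpha},\vec{v})\le\epsilon$. *)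

theory Defs
  imports "HOL-Probability.Probability"
begin

definition cube :: "nat \<Rightarrow> bool list set" where
  "cube n = {x. length x = n}"

definition cube_mean :: "nat \<Rightarrow> (bool list \<Rightarrow> real) \<Rightarrow> real" where
  "cube_mean n g = (\<Sum>x\<in>cube n. g x) / 2 ^ n"

definition d_max :: "real list \<Rightarrow> real list \<Rightarrow> real" where
  "d_max xs ys = Max (insert 0 {\<bar>xs ! i - ys ! i\<bar> | i. i < length xs})"

definition samples_pmf :: "nat \<Rightarrow> nat \<Rightarrow> bool list list pmf" where
  "samples_pmf n m = pmf_of_set {xs. length xs = m \<and> (\<forall>x\<in>set xs. x \<in> cube n)}"

text \<open>A randomized sampling algorithm is modelled as a map from the observed
  samples (each a point x together with the values f_1(x),...,f_d(x)) to a
  distribution over outputs (its internal randomness).\<close>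
definition run_alg ::
  "nat \<Rightarrow> nat \<Rightarrow> nat \<Rightarrow> ((bool list \<times> real list) list \<Rightarrow> real list pmf)
    \<Rightarrow> (nat \<Rightarrow> bool list \<Rightarrow> real) \<Rightarrow> real list pmf" where
  "run_alg n d m A f =
     bind_pmf (samples_pmf n m) (\<lambda>xs. A (map (\<lambda>x. (x, map (\<lambda>i. f i x) [0..<d])) xs))"

definition pseudodet_approx ::
  "nat \<Rightarrow> real \<Rightarrow> real \<Rightarrow> real list pmf \<Rightarrow> real list \<Rightarrow> bool" where
  "pseudodet_approx k eps delta P v \<longleftrightarrow>
     (\<exists>S. finite S \<and> card S \<le> k \<and>
        measure_pmf.prob P {a. a \<in> S \<and> length a = length v \<and> d_max a v \<le> eps} \<ge> 1 - delta)"

end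

theory Submission
  imports Defs
begin

text \<open>With \<open>m\<close> of order \<open>(d+1)\<^sup>2/\<epsilon>\<^sup>2 \<cdot> log(d/\<delta>)\<close> samples, Hoeffding's inequality and a union
  bound make all \<open>d\<close> empirical averages \<open>\<eta>\<close>-close to the true means, \<open>\<eta> = \<epsilon>/(8(d+1))\<close>, with
  probability at least \<open>1 - \<delta>\<close>. Rounding the estimates to a grid of spacing \<open>\<epsilon>\<close> is not
  pseudodeterministic by itself, since an estimate near a grid point may round either way.
  So consider the \<open>d+1\<close> grids of spacing \<open>\<epsilon>\<close> shifted by multiples of \<open>\<epsilon>/(d+1)\<close>: their points
  are \<open>\<epsilon>/(d+1) \<ge> 6\<eta>\<close> apart, so each true mean is \<open>3\<eta>\<close>-close to points of at most one
  shifted grid, and by pigeonhole some shift keeps every true mean \<open>3\<eta>\<close> away from its grid.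
  The algorithm rounds down on the least shift that keeps all estimates \<open>2\<eta>\<close> away from its
  grid; on such a shift no grid point separates an estimate from its true mean, so the output
  is the rounding of the true mean vector on one of \<open>d+1\<close> grids, which is \<open>\<epsilon>\<close>-close to it.\<close>

definition grid_round :: "real \<Rightarrow> real \<Rightarrow> real \<Rightarrow> real" where
  "grid_round L s x = s + L * of_int \<lfloor>(x - s) / L\<rfloor>"

lemma grid_round_bounds:
  assumes "L > 0"
  shows "grid_round L s x \<le> x" "x - L < grid_round L s x"
  using floor_divide_lower[OF assms, of "x - s"] floor_divide_upper[OF assms, of "x - s"]
  by (simp_all add: grid_round_def algebra_simps)

lemma grid_round_eq:
  assumes L: "L > 0" and no_grid_point_between: "\<forall>z::int. \<bar>u - v\<bar> < \<bar>u - (s + of_int z * L)\<bar>"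
  shows "grid_round L s u = grid_round L s v"
proof -
  define a where "a = \<lfloor>(u - s) / L\<rfloor>"
  define c where "c = \<lfloor>(v - s) / L\<rfloor>"
  have a: "s + of_int a * L \<le> u" "u < s + of_int (a + 1) * L"
    using floor_divide_lower[OF L, of "u - s"] floor_divide_upper[OF L, of "u - s"]
    by (simp_all add: a_def algebra_simps)
  have c: "s + of_int c * L \<le> v" "v < s + of_int (c + 1) * L"
    using floor_divide_lower[OF L, of "v - s"] floor_divide_upper[OF L, of "v - s"]
    by (simp_all add: c_def algebra_simps)
  have step: "of_int (i + 1) * L \<le> of_int j * L" if "i < j" for i j :: int
    using that L by (intro mult_right_mono) simp_all
  have "\<not> a < c"
  proof
    assume "a < c"
    then have "\<bar>u - (s + of_int c * L)\<bar> \<le> \<bar>u - v\<bar>" using a c step[of a c] by linarith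
    then show False using no_grid_point_between by (meson not_less)
  qed
  moreover have "\<not> c < a"
  proof
    assume "c < a"
    then have "\<bar>u - (s + of_int a * L)\<bar> \<le> \<bar>u - v\<bar>" using a c step[of c a] by linarith
    then show False using no_grid_point_between by (meson not_less)
  qed
  ultimately show ?thesis by (simp add: grid_round_def a_def c_def)
qed

definition grid_shift :: "real \<Rightarrow> nat \<Rightarrow> nat \<Rightarrow> real" where
  "grid_shift L D k = real k * L / (real D + 1)"

lemma shifted_grids_separated:
  assumes L: "L > 0" and "k \<le> D" "k' \<le> D" "k \<noteq> k'"
  shows "L / (real D + 1) \<le> \<bar>(grid_shift L D k + of_int z * L) - (grid_shift L D k' + of_int z' * L)\<bar>"
proof -
  define N where "N = (int k - int k') + (z - z') * (int D + 1)"
  have "0 < real D + 1" by simp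
  then have diff: "(grid_shift L D k + of_int z * L) - (grid_shift L D k' + of_int z' * L)
      = L / (real D + 1) * of_int N"
    unfolding N_def grid_shift_def by (simp add: divide_simps) (simp add: algebra_simps)
  have "N \<noteq> 0"
  proof
    assume "N = 0"
    then have "(z' - z) * (int D + 1) = int k - int k'" by (simp add: N_def algebra_simps)
    then have "\<bar>z' - z\<bar> * (int D + 1) = \<bar>int k - int k'\<bar>"
      by (metis abs_mult abs_of_nonneg of_nat_0_le_iff add_nonneg_nonneg zero_le_one)
    also have "\<dots> < 1 * (int D + 1)" using assms by simp
    finally have "z' = z" by (simp only: mult_less_cancel_right) linarith
    with \<open>N = 0\<close> \<open>k \<noteq> k'\<close> show False by (simp add: N_def)
  qed
  then have "1 \<le> \<bar>real_of_int N\<bar>" by linarith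
  then have "L / (real D + 1) * 1 \<le> L / (real D + 1) * \<bar>real_of_int N\<bar>"
    using L by (intro mult_left_mono) simp_all
  then show ?thesis using L by (simp add: diff abs_mult)
qed

definition far_from_grid :: "real \<Rightarrow> real \<Rightarrow> real \<Rightarrow> real \<Rightarrow> bool" where
  "far_from_grid r L s x \<longleftrightarrow> (\<forall>z::int. r \<le> \<bar>x - (s + of_int z * L)\<bar>)"

lemma exists_shift_far_from_grid:
  assumes L: "L > 0" and small: "2 * r * (real D + 1) \<le> L"
  shows "\<exists>k\<le>D. \<forall>i<D. far_from_grid r L (grid_shift L D k) (v i)"
proof -
  define bad where "bad i = {k. k \<le> D \<and> \<not> far_from_grid r L (grid_shift L D k) (v i)}" for i
  have finite_bad: "finite (bad i)" for i
    by (rule finite_subset[of _ "{..D}"]) (auto simp: bad_def)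
  have "card (bad i) \<le> 1" for i
  proof -
    have "k = k'" if k_bad: "k \<in> bad i" and k'_bad: "k' \<in> bad i" for k k'
    proof (rule ccontr)
      assume "k \<noteq> k'"
      have "k \<le> D" "k' \<le> D" using k_bad k'_bad by (simp_all add: bad_def)
      obtain z where "\<bar>v i - (grid_shift L D k + of_int z * L)\<bar> < r"
        using k_bad by (auto simp: bad_def far_from_grid_def not_le)
      moreover obtain z' where "\<bar>v i - (grid_shift L D k' + of_int z' * L)\<bar> < r"
        using k'_bad by (auto simp: bad_def far_from_grid_def not_le)
      moreover have "2 * r \<le> L / (real D + 1)" using small by (simp add: field_simps)
      ultimately show False
        using shifted_grids_separated[OF L \<open>k \<le> D\<close> \<open>k' \<le> D\<close> \<open>k \<noteq> k'\<close>, of z z'] by linarith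
    qed
    then show ?thesis using card_le_Suc0_iff_eq[OF finite_bad] by auto
  qed
  then have "card (\<Union>i<D. bad i) \<le> D"
    using card_UN_le[of "{..<D}" bad] sum_mono[of "{..<D}" "\<lambda>i. card (bad i)" "\<lambda>_. 1"] by simp
  then have "\<not> {..D} \<subseteq> (\<Union>i<D. bad i)"
    using card_mono[of "\<Union>i<D. bad i" "{..D}"] finite_bad by auto
  then show ?thesis by (auto simp: bad_def)
qed

definition safe_shift :: "real \<Rightarrow> real \<Rightarrow> nat \<Rightarrow> (nat \<Rightarrow> real) \<Rightarrow> nat \<Rightarrow> bool" where
  "safe_shift \<eta> L D u k \<longleftrightarrow> k \<le> D \<and> (\<forall>i<D. far_from_grid (2 * \<eta>) L (grid_shift L D k) (u i))"

text \<open>If no shift is safe, \<open>LEAST\<close> returns an unspecified number and the output is junk;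
  this only happens outside the event where all estimates are close to the true means.\<close>

definition shifted_rounding :: "real \<Rightarrow> real \<Rightarrow> nat \<Rightarrow> (nat \<Rightarrow> real) \<Rightarrow> real list" where
  "shifted_rounding \<eta> L D u =
     (let k = LEAST k. safe_shift \<eta> L D u k in map (\<lambda>i. grid_round L (grid_shift L D k) (u i)) [0..<D])"

lemma shifted_rounding_cong:
  assumes "\<forall>i<D. u i = u' i"
  shows "shifted_rounding \<eta> L D u = shifted_rounding \<eta> L D u'"
proof -
  have "safe_shift \<eta> L D u = safe_shift \<eta> L D u'" using assms by (auto simp: safe_shift_def fun_eq_iff)
  then show ?thesis using assms by (simp add: shifted_rounding_def Let_def)
qed

definition rounding_candidates :: "real \<Rightarrow> nat \<Rightarrow> (nat \<Rightarrow> real) \<Rightarrow> real list set" where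
  "rounding_candidates L D v = (\<lambda>k. map (\<lambda>i. grid_round L (grid_shift L D k) (v i)) [0..<D]) ` {..D}"

lemma shifted_rounding_in_candidates:
  assumes L: "L > 0" and \<eta>: "\<eta> > 0" and small: "6 * \<eta> * (real D + 1) \<le> L"
    and close: "\<forall>i<D. \<bar>u i - v i\<bar> \<le> \<eta>"
  shows "shifted_rounding \<eta> L D u \<in> rounding_candidates L D v"
proof -
  obtain k where "k \<le> D" and far: "\<forall>i<D. far_from_grid (3 * \<eta>) L (grid_shift L D k) (v i)"
    using exists_shift_far_from_grid[OF L, of "3 * \<eta>" D v] small by auto
  have "safe_shift \<eta> L D u k"
    unfolding safe_shift_def far_from_grid_def
  proof (intro conjI allI impI)
    fix i z assume "i < D"
    then have "3 * \<eta> \<le> \<bar>v i - (grid_shift L D k + of_int z * L)\<bar>" "\<bar>u i - v i\<bar> \<le> \<eta>"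
      using far close by (auto simp: far_from_grid_def)
    then show "2 * \<eta> \<le> \<bar>u i - (grid_shift L D k + of_int z * L)\<bar>" by linarith
  qed (fact \<open>k \<le> D\<close>)
  then have k0: "safe_shift \<eta> L D u (LEAST k. safe_shift \<eta> L D u k)" by (rule LeastI)
  define k0 where "k0 = (LEAST k. safe_shift \<eta> L D u k)"
  have "grid_round L (grid_shift L D k0) (u i) = grid_round L (grid_shift L D k0) (v i)" if "i < D" for i
  proof (rule grid_round_eq[OF L], intro allI)
    fix z :: int
    have "2 * \<eta> \<le> \<bar>u i - (grid_shift L D k0 + of_int z * L)\<bar>"
      using k0 that by (simp add: k0_def safe_shift_def far_from_grid_def)
    then show "\<bar>u i - v i\<bar> < \<bar>u i - (grid_shift L D k0 + of_int z * L)\<bar>"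
      using close that \<eta> by force
  qed
  moreover have "k0 \<le> D" using k0 by (simp add: k0_def safe_shift_def)
  ultimately show ?thesis
    by (auto simp: shifted_rounding_def rounding_candidates_def simp flip: k0_def)
qed

lemma d_max_le:
  assumes "length a = length v" "\<forall>i<length a. \<bar>a ! i - v ! i\<bar> \<le> e" "0 \<le> e"
  shows "d_max a v \<le> e"
proof -
  have "finite {\<bar>a ! i - v ! i\<bar> | i. i < length a}"
    using finite_image_set[of "\<lambda>i. i < length a" "\<lambda>i. \<bar>a ! i - v ! i\<bar>"] by simp
  then show ?thesis unfolding d_max_def using assms by (subst Max_le_iff) auto
qed

lemma pseudodet_approxI:
  assumes "finite S" "card S \<le> k" "\<forall>a\<in>S. length a = length v \<and> d_max a v \<le> eps"
    and "1 - delta \<le> measure_pmf.prob P S"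
  shows "pseudodet_approx k eps delta P v"
proof -
  have "{a. a \<in> S \<and> length a = length v \<and> d_max a v \<le> eps} = S" using assms(3) by blast
  then show ?thesis unfolding pseudodet_approx_def using assms(1,2,4) by auto
qed

lemma finite_rounding_candidates: "finite (rounding_candidates L D v)"
  by (simp add: rounding_candidates_def)

lemma card_rounding_candidates: "card (rounding_candidates L D v) \<le> D + 1"
  using card_image_le[of "{..D}"] by (simp add: rounding_candidates_def)

lemma rounding_candidate_close:
  assumes "L > 0" "a \<in> rounding_candidates L D v"
  shows "length a = D" "d_max a (map v [0..<D]) \<le> L"
proof -
  obtain k where a: "a = map (\<lambda>i. grid_round L (grid_shift L D k) (v i)) [0..<D]"
    using assms(2) by (auto simp: rounding_candidates_def)
  then show "length a = D" by simp
  have "\<bar>grid_round L (grid_shift L D k) (v i) - v i\<bar> \<le> L" for i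
    using grid_round_bounds[OF assms(1), where s = "grid_shift L D k" and x = "v i"] by linarith
  then show "d_max a (map v [0..<D]) \<le> L"
    using assms(1) by (intro d_max_le) (auto simp: a)
qed

lemma finite_cube: "finite (cube n)"
  unfolding cube_def using finite_lists_length_eq[of "UNIV :: bool set" n] by simp

lemma cube_nonempty: "cube n \<noteq> {}"
  unfolding cube_def by (auto intro!: exI[of _ "replicate n True"])

lemma card_cube: "card (cube n) = 2 ^ n"
  unfolding cube_def using card_lists_length_eq[of "UNIV :: bool set" n] by simp

lemma cube_mean_bounds:
  assumes "\<forall>x\<in>cube n. 0 \<le> h x \<and> h x \<le> 1"
  shows "0 \<le> cube_mean n h" "cube_mean n h \<le> 1"
proof -
  show "0 \<le> cube_mean n h" using assms unfolding cube_mean_def by (simp add: sum_nonneg)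
  have "(\<Sum>x\<in>cube n. h x) \<le> (\<Sum>x\<in>cube n. 1)" using assms by (intro sum_mono) auto
  then show "cube_mean n h \<le> 1" by (simp add: cube_mean_def card_cube)
qed

definition indexed_samples_pmf :: "nat \<Rightarrow> nat \<Rightarrow> (nat \<Rightarrow> bool list) pmf" where
  "indexed_samples_pmf n m = Pi_pmf {..<m} [] (\<lambda>_. pmf_of_set (cube n))"

lemma samples_pmf_eq_map_indexed:
  "samples_pmf n m = map_pmf (\<lambda>g. map g [0..<m]) (indexed_samples_pmf n m)"
proof -
  define B where "B = PiE_dflt {..<m} [] (\<lambda>_. cube n)"
  have uniform: "indexed_samples_pmf n m = pmf_of_set B" unfolding indexed_samples_pmf_def B_def
    by (rule Pi_pmf_of_set) (auto simp: finite_cube cube_nonempty)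
  have fin: "finite B" unfolding B_def by (intro finite_PiE_dflt) (auto simp: finite_cube)
  have nonempty: "B \<noteq> {}"
  proof -
    obtain c where "c \<in> cube n" using cube_nonempty by blast
    then have "(\<lambda>j. if j < m then c else []) \<in> B" by (auto simp: B_def PiE_dflt_def)
    then show ?thesis by blast
  qed
  have inj: "inj_on (\<lambda>g. map g [0..<m]) B"
  proof (rule inj_onI, rule ext)
    fix g g' j assume "g \<in> B" "g' \<in> B" and eq: "map g [0..<m] = map g' [0..<m]"
    show "g j = g' j"
    proof (cases "j < m")
      case True
      then show ?thesis using arg_cong[OF eq, of "\<lambda>xs. xs ! j"] by simp
    next
      case False
      then show ?thesis using \<open>g \<in> B\<close> \<open>g' \<in> B\<close> by (auto simp: B_def PiE_dflt_def)
    qed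
  qed
  have image: "(\<lambda>g. map g [0..<m]) ` B = {xs. length xs = m \<and> (\<forall>x\<in>set xs. x \<in> cube n)}"
  proof (intro equalityI subsetI)
    fix xs assume "xs \<in> (\<lambda>g. map g [0..<m]) ` B"
    then show "xs \<in> {xs. length xs = m \<and> (\<forall>x\<in>set xs. x \<in> cube n)}" by (auto simp: B_def PiE_dflt_def)
  next
    fix xs assume xs: "xs \<in> {xs. length xs = m \<and> (\<forall>x\<in>set xs. x \<in> cube n)}"
    define g where "g j = (if j < m then xs ! j else [])" for j
    have "g \<in> B" using xs by (auto simp: B_def PiE_dflt_def g_def)
    moreover have "map g [0..<m] = xs" using xs by (intro nth_equalityI) (auto simp: g_def)
    ultimately show "xs \<in> (\<lambda>g. map g [0..<m]) ` B" by blast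
  qed
  show ?thesis unfolding samples_pmf_def uniform map_pmf_of_set_inj[OF inj nonempty fin] image ..
qed

lemma indexed_samples_hoeffding:
  assumes h: "\<forall>x\<in>cube n. 0 \<le> h x \<and> h x \<le> 1" and "m > 0" "t \<ge> 0"
  shows "measure_pmf.prob (indexed_samples_pmf n m)
           {g. t \<le> \<bar>(\<Sum>j<m. h (g j)) - real m * cube_mean n h\<bar>} \<le> 2 * exp (-2 * t\<^sup>2 / real m)"
proof -
  let ?P = "indexed_samples_pmf n m"
  have in_cube: "g j \<in> cube n" if "g \<in> set_pmf ?P" "j < m" for g j
    using that unfolding indexed_samples_pmf_def
    by (subst (asm) set_Pi_pmf) (auto simp: PiE_dflt_def set_pmf_of_set finite_cube cube_nonempty)
  have expectation: "measure_pmf.expectation ?P (\<lambda>g. h (g j)) = cube_mean n h" if "j < m" for j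
  proof -
    have "map_pmf (\<lambda>g. g j) ?P = pmf_of_set (cube n)"
      unfolding indexed_samples_pmf_def using that by (subst Pi_pmf_component) auto
    then have "measure_pmf.expectation ?P (\<lambda>g. h (g j)) = measure_pmf.expectation (pmf_of_set (cube n)) h"
      by (metis integral_map_pmf)
    also have "\<dots> = (\<Sum>x\<in>cube n. h x) / card (cube n)"
      by (rule integral_pmf_of_set) (auto simp: finite_cube cube_nonempty)
    finally show ?thesis by (simp add: cube_mean_def card_cube)
  qed
  interpret Hoeffding_ineq "measure_pmf ?P" "{..<m}" "\<lambda>j g. h (g j)" "\<lambda>_. 0" "\<lambda>_. 1"
    "\<Sum>j<m. measure_pmf.expectation ?P (\<lambda>g. h (g j))"
  proof unfold_locales
    show "prob_space.indep_vars ?P (\<lambda>_. borel) (\<lambda>j g. h (g j)) {..<m}"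
      using prob_space.indep_vars_compose2[OF measure_pmf.prob_space_axioms
          indep_vars_Pi_pmf[of "{..<m}" "[]" "\<lambda>_. pmf_of_set (cube n)"], of "\<lambda>_. h" "\<lambda>_. borel"]
      unfolding indexed_samples_pmf_def by simp
  next
    fix j assume "j \<in> {..<m}"
    then show "AE g in measure_pmf ?P. h (g j) \<in> {0..1}"
      using in_cube h by (intro AE_pmfI) auto
  qed simp_all
  have "measure_pmf.prob ?P {g \<in> space ?P. t \<le> \<bar>(\<Sum>j<m. h (g j)) - (\<Sum>j<m. measure_pmf.expectation ?P (\<lambda>g. h (g j)))\<bar>}
         \<le> 2 * exp (- 2 * t\<^sup>2 / (\<Sum>j<m. (1 - 0)\<^sup>2))"
    by (rule Hoeffding_ineq_abs_ge) (use assms in simp_all)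
  then show ?thesis by (simp add: expectation)
qed

lemma indexed_samples_means_close:
  assumes "0 < d" "0 < m" "0 < \<eta>" "0 < delta" and m_large: "ln (2 * real d / delta) \<le> 2 * real m * \<eta>\<^sup>2"
    and f: "\<forall>i<d. \<forall>x\<in>cube n. 0 \<le> f i x \<and> f i x \<le> 1"
  shows "1 - delta \<le> measure_pmf.prob (indexed_samples_pmf n m)
           {g. \<forall>i<d. \<bar>(\<Sum>j<m. f i (g j)) / real m - cube_mean n (f i)\<bar> < \<eta>}"
    (is "_ \<le> measure_pmf.prob ?P ?close")
proof -
  define far where "far i = {g. real m * \<eta> \<le> \<bar>(\<Sum>j<m. f i (g j)) - real m * cube_mean n (f i)\<bar>}" for i
  have "\<bar>S / real m - \<mu>\<bar> < \<eta> \<longleftrightarrow> \<bar>S - real m * \<mu>\<bar> < real m * \<eta>" for S \<mu>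
  proof -
    have "S / real m - \<mu> = (S - real m * \<mu>) / real m" using \<open>0 < m\<close> by (simp add: field_simps)
    then have "\<bar>S / real m - \<mu>\<bar> = \<bar>S - real m * \<mu>\<bar> / real m" by simp
    then show ?thesis using \<open>0 < m\<close> by (simp add: pos_divide_less_eq mult.commute)
  qed
  then have not_close: "UNIV - ?close = (\<Union>i<d. far i)" by (auto simp: far_def not_less)
  have far_prob: "measure_pmf.prob ?P (far i) \<le> delta / real d" if "i < d" for i
  proof -
    have "measure_pmf.prob ?P (far i) \<le> 2 * exp (-2 * (real m * \<eta>)\<^sup>2 / real m)"
      unfolding far_def using f that assms by (intro indexed_samples_hoeffding) auto
    also have "\<dots> = 2 * exp (- (2 * real m * \<eta>\<^sup>2))"
      using \<open>0 < m\<close> by (simp add: power2_eq_square)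
    also have "\<dots> \<le> 2 * exp (- ln (2 * real d / delta))" using m_large by simp
    also have "\<dots> = delta / real d" using assms by (simp add: exp_minus)
    finally show ?thesis .
  qed
  have "measure_pmf.prob ?P (UNIV - ?close) \<le> (\<Sum>i<d. measure_pmf.prob ?P (far i))"
    unfolding not_close by (rule measure_pmf.finite_measure_subadditive_finite) auto
  also have "\<dots> \<le> (\<Sum>i<d. delta / real d)" by (intro sum_mono far_prob) simp
  also have "\<dots> = delta" using \<open>0 < d\<close> by simp
  finally show ?thesis using measure_pmf.prob_compl[of ?close ?P] by simp
qed

definition rounding_algorithm :: "real \<Rightarrow> real \<Rightarrow> nat \<Rightarrow> (bool list \<times> real list) list \<Rightarrow> real list pmf" where
  "rounding_algorithm \<eta> L d ys =
     return_pmf (shifted_rounding \<eta> L d (\<lambda>i. sum_list (map (\<lambda>y. snd y ! i) ys) / real (length ys)))"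

lemma run_rounding_algorithm:
  "run_alg n d m (rounding_algorithm \<eta> L d) f =
     map_pmf (\<lambda>g. shifted_rounding \<eta> L d (\<lambda>i. (\<Sum>j<m. f i (g j)) / real m)) (indexed_samples_pmf n m)"
  unfolding run_alg_def samples_pmf_eq_map_indexed bind_map_pmf unfolding map_pmf_def
proof (intro bind_pmf_cong refl)
  fix g
  have "shifted_rounding \<eta> L d (\<lambda>i. sum_list (map (\<lambda>j. map (\<lambda>i. f i (g j)) [0..<d] ! i) [0..<m]) / real m)
      = shifted_rounding \<eta> L d (\<lambda>i. (\<Sum>j<m. f i (g j)) / real m)"
    by (intro shifted_rounding_cong) (simp add: sum_list_sum_nth atLeast0LessThan)
  then show "rounding_algorithm \<eta> L d (map (\<lambda>x. (x, map (\<lambda>i. f i x) [0..<d])) (map g [0..<m]))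
      = return_pmf (shifted_rounding \<eta> L d (\<lambda>i. (\<Sum>j<m. f i (g j)) / real m))"
    by (simp add: rounding_algorithm_def comp_def)
qed

lemma rounding_algorithm_pseudodet:
  assumes "0 < d" "0 < m" "0 < \<eta>" "0 < delta" and small: "6 * \<eta> * (real d + 1) \<le> eps"
    and m_large: "ln (2 * real d / delta) \<le> 2 * real m * \<eta>\<^sup>2"
    and f: "\<forall>i<d. \<forall>x\<in>cube n. 0 \<le> f i x \<and> f i x \<le> 1"
  shows "pseudodet_approx (d + 1) eps delta (run_alg n d m (rounding_algorithm \<eta> eps d) f)
           (map (\<lambda>i. cube_mean n (f i)) [0..<d])"
proof -
  let ?P = "indexed_samples_pmf n m"
  let ?S = "rounding_candidates eps d (\<lambda>i. cube_mean n (f i))"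
  define F where "F g = shifted_rounding \<eta> eps d (\<lambda>i. (\<Sum>j<m. f i (g j)) / real m)" for g
  define close where "close = {g. \<forall>i<d. \<bar>(\<Sum>j<m. f i (g j)) / real m - cube_mean n (f i)\<bar> < \<eta>}"
  have "0 < 6 * \<eta> * (real d + 1)" using \<open>0 < \<eta>\<close> by simp
  then have "0 < eps" using small by linarith
  have "close \<subseteq> F -` ?S"
    using shifted_rounding_in_candidates[OF \<open>0 < eps\<close> \<open>0 < \<eta>\<close> small]
    by (auto simp: close_def F_def less_imp_le)
  then have "measure_pmf.prob ?P close \<le> measure_pmf.prob (map_pmf F ?P) ?S"
    by (simp add: measure_pmf.finite_measure_mono)
  moreover have "1 - delta \<le> measure_pmf.prob ?P close"
    unfolding close_def using assms by (intro indexed_samples_means_close) auto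
  ultimately show ?thesis
    unfolding run_rounding_algorithm F_def[symmetric]
    using rounding_candidate_close[OF \<open>0 < eps\<close>]
    by (intro pseudodet_approxI[of ?S] finite_rounding_candidates card_rounding_candidates) auto
qed

lemma constant_algorithm_pseudodet:
  assumes "1 \<le> eps" "0 \<le> delta" and f: "\<forall>i<d. \<forall>x\<in>cube n. 0 \<le> f i x \<and> f i x \<le> 1"
  shows "pseudodet_approx (d + 1) eps delta (run_alg n d m (\<lambda>_. return_pmf (replicate d 0)) f)
           (map (\<lambda>i. cube_mean n (f i)) [0..<d])"
proof (rule pseudodet_approxI)
  have "\<bar>cube_mean n (f i)\<bar> \<le> eps" if "i < d" for i
    using cube_mean_bounds[of n "f i"] f that \<open>1 \<le> eps\<close> by auto
  then show "\<forall>a\<in>{replicate d 0}. length a = length (map (\<lambda>i. cube_mean n (f i)) [0..<d])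
      \<and> d_max a (map (\<lambda>i. cube_mean n (f i)) [0..<d]) \<le> eps"
    using \<open>1 \<le> eps\<close> by (auto intro!: d_max_le)
qed (use \<open>0 \<le> delta\<close> in \<open>simp_all add: run_alg_def\<close>)

lemma ceiling_sample_count:
  assumes "0 < \<eta>" "1 < x"
  defines "m \<equiv> nat \<lceil>ln x / (2 * \<eta>\<^sup>2)\<rceil>"
  shows "0 < m" "ln x \<le> 2 * real m * \<eta>\<^sup>2"
proof -
  have "ln x / (2 * \<eta>\<^sup>2) \<le> real m" unfolding m_def by linarith
  then show "ln x \<le> 2 * real m * \<eta>\<^sup>2" using \<open>0 < \<eta>\<close> by (simp add: field_simps)
  then show "0 < m" using \<open>1 < x\<close> by (cases m) simp_all
qed

lemma sample_count_bound:
  assumes "1 \<le> d" "0 < eps" "eps < 1" "0 < delta" "delta < 1/2"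
  shows "real (nat \<lceil>ln (2 * real d / delta) / (2 * (eps / (8 * (real d + 1)))\<^sup>2)\<rceil>)
           \<le> 65 * ((real d + 1)^2 / eps^2 * ln (real d / delta))"
proof -
  define X where "X = (real d + 1)^2 / eps^2 * ln (real d / delta)"
  define y where "y = ln (2 * real d / delta) / (2 * (eps / (8 * (real d + 1)))\<^sup>2)"
  have "2 \<le> real d / delta" using assms by (simp add: field_simps)
  then have ln2_le: "ln 2 \<le> ln (real d / delta)" by simp
  have "ln (1/2 :: real) \<le> 1/2 - 1" by (rule ln_le_minus_one) simp
  then have "1/2 \<le> ln (2 :: real)" by (simp add: ln_div)
  have "(2::real)^2 \<le> (real d + 1)^2" using assms by (intro power_mono) simp_all
  moreover have "eps^2 \<le> 1" using assms by (simp add: power_le_one)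
  ultimately have "4 \<le> (real d + 1)^2 / eps^2" using assms by (simp add: field_simps)
  then have "4 * (1/2) \<le> X"
    unfolding X_def using \<open>1/2 \<le> ln 2\<close> ln2_le by (intro mult_mono) auto
  have "ln (2 * (real d / delta)) = ln 2 + ln (real d / delta)"
    using assms by (intro ln_mult_pos) simp_all
  then have "ln (2 * real d / delta) \<le> 2 * ln (real d / delta)" using ln2_le by simp
  moreover have "y = 32 * ((real d + 1)^2 / eps^2) * ln (2 * real d / delta)"
    unfolding y_def using assms by (simp add: field_simps power2_eq_square)
  ultimately have "y \<le> 32 * ((real d + 1)^2 / eps^2) * (2 * ln (real d / delta))"
    by (metis mult_left_mono zero_le_divide_iff zero_le_power2 mult_nonneg_nonneg zero_le_numeral)
  then have "y \<le> 64 * X" by (simp add: X_def)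
  moreover have "0 \<le> y" unfolding y_def using \<open>2 \<le> real d / delta\<close> assms
    by (intro divide_nonneg_pos) (simp_all add: field_simps)
  ultimately show ?thesis using \<open>4 * (1/2) \<le> X\<close> unfolding X_def[symmetric] y_def[symmetric] by linarith
qed

theorem mainTheorem7:
  "\<exists>C::real. C > 0 \<and>
    (\<forall>(n::nat) (d::nat) (eps::real) (delta::real).
       d \<ge> 1 \<and> eps > 0 \<and> 0 < delta \<and> delta < 1/2 \<longrightarrow>
       (\<exists>(m::nat) A.
          real m \<le> C * ((real d + 1)^2 / eps^2 * ln (real d / delta)) \<and>
          (\<forall>f :: nat \<Rightarrow> bool list \<Rightarrow> real.
             (\<forall>i<d. \<forall>x\<in>cube n. 0 \<le> f i x \<and> f i x \<le> 1) \<longrightarrow>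
             pseudodet_approx (d + 1) eps delta (run_alg n d m A f)
               (map (\<lambda>i. cube_mean n (f i)) [0..<d]))))"
proof (rule exI[of _ 65], intro conjI allI impI)
  fix n d :: nat and eps delta :: real
  assume "d \<ge> 1 \<and> eps > 0 \<and> 0 < delta \<and> delta < 1/2"
  then have d: "1 \<le> d" and eps: "0 < eps" and delta: "0 < delta" "delta < 1/2" by auto
  have "1 < 2 * real d / delta" and "0 \<le> ln (real d / delta)" using d delta by (simp_all add: field_simps)
  show "\<exists>m A. real m \<le> 65 * ((real d + 1)^2 / eps^2 * ln (real d / delta)) \<and>
      (\<forall>f. (\<forall>i<d. \<forall>x\<in>cube n. 0 \<le> f i x \<and> f i x \<le> 1) \<longrightarrow>
        pseudodet_approx (d + 1) eps delta (run_alg n d m A f) (map (\<lambda>i. cube_mean n (f i)) [0..<d]))"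
  proof (cases "1 \<le> eps")
    case True
    \<comment> \<open>Here the sample bound may be below 1, but all means lie in [0,1], so no samples are needed.\<close>
    then show ?thesis
      using constant_algorithm_pseudodet \<open>0 \<le> ln (real d / delta)\<close> delta
      by (intro exI[of _ 0] exI[of _ "\<lambda>_. return_pmf (replicate d 0)"]) simp
  next
    case False
    define \<eta> where "\<eta> = eps / (8 * (real d + 1))"
    define m where "m = nat \<lceil>ln (2 * real d / delta) / (2 * \<eta>\<^sup>2)\<rceil>"
    have "0 < \<eta>" "6 * \<eta> * (real d + 1) \<le> eps" using eps by (simp_all add: \<eta>_def field_simps)
    moreover have "0 < m" "ln (2 * real d / delta) \<le> 2 * real m * \<eta>\<^sup>2"
      using ceiling_sample_count[OF \<open>0 < \<eta>\<close> \<open>1 < 2 * real d / delta\<close>] by (simp_all add: m_def)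
    moreover have "real m \<le> 65 * ((real d + 1)^2 / eps^2 * ln (real d / delta))"
      using sample_count_bound d eps False delta by (simp add: m_def \<eta>_def)
    ultimately show ?thesis
      using rounding_algorithm_pseudodet d delta
      by (intro exI[of _ m] exI[of _ "rounding_algorithm \<eta> eps d"]) simp
  qed
qed simp

end
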